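(* Let $p$ be a prime and let $f(x,y)=\lambda xy+g(x)+h(y)$ with $\lambda\in\mathbb{Z}_p\setminus\{0\}$ and $g,h:\mathbb{Z}_p\to\mathbb{Z}_p$. Let $P$ be any box with inputs and outputs in $\mathbb{Z}_p$, and for $j\in\mathbb{Z}_p$ define $$\nu_j=\frac1{p^2}\sum_{x,y=0}^{p-1}\sum_{k=0}^{p-1}P(a=k,\,b=k-f(x,y)+j\mid x,y).$$ Then $$P\to\sum_{j=0}^{p-1}\nu_jP^f_j\quad\text{and}\quad P\to\sum_{j=0}^{p-1}\nu_j\,PR_{p,\lambda^{-1}j}.$$
   Context: Let $p$ be a prime. All arithmetic on elements of $\mathbb{Z}_p$ is modulo $p$, and $\lambda^{-1}$ is the inverse of $\lambda$ in $\mathbb{Z}_p$. A box is a conditional probability distribution $P(a,b\mid x,y)$ with $a,b,x,y\in\mathbb{Z}_p$. It is shared by Alice, who supplies $x$ and receives $a$, and Bob, who supplies $y$ and receives $b$. Different copies act independently. A convex combination of boxes is the corresponding convex combination of conditional distributions. For $j\in\mathbb{Z}_p$: - $PR_{p,j}(a,b\mid x,y)=1/p$ if $a-b=xy-j$, and $0$ otherwise. - $P^f_j(a,b\mid x,y)=1/p$ if $a-b=f(x,y)-j$, and $0$ otherwise. $P_1\to P_2$ means the following. For some $N\ge1$, Alice and Bob, using shared randomness, $N$ copies of $P_1$, and local processing but no communication, can exactly produce outputs distributed as $P_2(a,b\mid x,y)$ for every input pair $(x,y)$. *)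

theory Defs
  imports "HOL-Number_Theory.Number_Theory"
begin

text \<open>Elements of Z_p are represented by naturals 0..p-1. A box is a function
  P a b x y giving P(a,b|x,y).\<close>

type_synonym box = "nat \<Rightarrow> nat \<Rightarrow> nat \<Rightarrow> nat \<Rightarrow> real"

definition is_box :: "nat \<Rightarrow> box \<Rightarrow> bool" where
  "is_box p P \<longleftrightarrow>
     (\<forall>a<p. \<forall>b<p. \<forall>x<p. \<forall>y<p. 0 \<le> P a b x y) \<and>
     (\<forall>x<p. \<forall>y<p. (\<Sum>a<p. \<Sum>b<p. P a b x y) = 1)"

definition PR :: "nat \<Rightarrow> nat \<Rightarrow> box" where
  "PR p j a b x y =
     (if [int a - int b = int x * int y - int j] (mod int p) then 1 / real p else 0)"

definition Pf :: "nat \<Rightarrow> (nat \<Rightarrow> nat \<Rightarrow> nat) \<Rightarrow> nat \<Rightarrow> box" where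
  "Pf p f j a b x y =
     (if [int a - int b = int (f x y) - int j] (mod int p) then 1 / real p else 0)"

definition inv_modp :: "nat \<Rightarrow> nat \<Rightarrow> nat" where
  "inv_modp p l = (THE m. m < p \<and> [l * m = 1] (mod p))"

definition zp :: "nat \<Rightarrow> int \<Rightarrow> nat" where
  "zp p z = nat (z mod int p)"

text \<open>P1 \<rightarrow> P2: for some N \<ge> 1, with shared randomness (a finitely supported
  distribution w on a set R of shared random values; local randomness is absorbed
  into it), Alice feeds input alpha i r x into copy i and Bob feeds beta i r y, and
  they compute their final outputs locally from their input, the shared randomness
  and their own outputs oa, ob of the N copies (no communication).\<close>
definition simulates :: "nat \<Rightarrow> box \<Rightarrow> box \<Rightarrow> bool" where
  "simulates p P1 P2 \<longleftrightarrow>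
    (\<exists>N::nat. N \<ge> 1 \<and>
     (\<exists>(R::nat set) (w::nat \<Rightarrow> real)
        (alpha::nat \<Rightarrow> nat \<Rightarrow> nat \<Rightarrow> nat) (beta::nat \<Rightarrow> nat \<Rightarrow> nat \<Rightarrow> nat)
        (A::nat \<Rightarrow> nat \<Rightarrow> (nat \<Rightarrow> nat) \<Rightarrow> nat) (B::nat \<Rightarrow> nat \<Rightarrow> (nat \<Rightarrow> nat) \<Rightarrow> nat).
        finite R \<and> (\<forall>r\<in>R. 0 \<le> w r) \<and> sum w R = 1 \<and>
        (\<forall>i<N. \<forall>r\<in>R. \<forall>x<p. alpha i r x < p) \<and>
        (\<forall>i<N. \<forall>r\<in>R. \<forall>y<p. beta i r y < p) \<and>
        (\<forall>r\<in>R. \<forall>x<p. \<forall>oa\<in>Pi\<^sub>E {..<N} (\<lambda>_. {..<p}). A r x oa < p) \<and>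
        (\<forall>r\<in>R. \<forall>y<p. \<forall>ob\<in>Pi\<^sub>E {..<N} (\<lambda>_. {..<p}). B r y ob < p) \<and>
        (\<forall>a<p. \<forall>b<p. \<forall>x<p. \<forall>y<p.
           P2 a b x y =
             (\<Sum>r\<in>R. w r *
               (\<Sum>oa\<in>Pi\<^sub>E {..<N} (\<lambda>_. {..<p}). \<Sum>ob\<in>Pi\<^sub>E {..<N} (\<lambda>_. {..<p}).
                  (\<Prod>i<N. P1 (oa i) (ob i) (alpha i r x) (beta i r y)) *
                  (if A r x oa = a \<and> B r y ob = b then 1 else 0))))))"

end

theory Submission
  imports Defs "HOL-Library.Countable"
begin

(* Alice and Bob share uniformly random
   u, v, c in Z_p and feed x+u, y+v into one copy of P.  Because
     f(x+u, y+v) - f(x,y) = [l*(x+u)*v + g(x+u) - g(x)] + [l*u*y + h(y+v) - h(y)],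
   the change of f splits into a part DA known to Alice and a part DB known to Bob, so
   the outputs a = a0 - DA + c and b = b0 + DB + c satisfy a - b = f(x,y) - j exactly when
   the box outputs satisfy a0 - b0 = f(x+u,y+v) - j.  Averaging over u, v (which makes the
   inputs of P uniform) and over c (which makes a uniform) yields the mixture of the
   P^f_j with weights nu_j.  Relabelling a -> l^{-1}(a - g x), b -> l^{-1}(b + h y) then
   turns P^f_j into PR_{p, l^{-1} j}.

   The simulation identities hold for any function P. *)

section \<open>Representatives of residues modulo p\<close>

lemma zp_less: "0 < p \<Longrightarrow> zp p z < p"
  unfolding zp_def by (simp add: nat_less_iff)

lemma int_zp: "0 < p \<Longrightarrow> int (zp p z) = z mod int p"
  unfolding zp_def by simp

lemma cong_int_zp: "0 < p \<Longrightarrow> [int (zp p z) = z] (mod int p)"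
  unfolding zp_def cong_def by simp

lemma zp_eq_zp_iff: "0 < p \<Longrightarrow> zp p z1 = zp p z2 \<longleftrightarrow> [z1 = z2] (mod int p)"
  unfolding zp_def cong_def by (simp add: nat_eq_iff)

lemma zp_eq_iff: "0 < p \<Longrightarrow> a < p \<Longrightarrow> zp p z = a \<longleftrightarrow> [z = int a] (mod int p)"
  unfolding zp_def cong_def by auto

lemma zp_add_eq_iff:
  assumes "0 < p" "a < p" "a0 < p"
  shows "zp p (int a0 + t) = a \<longleftrightarrow> a0 = zp p (int a - t)"
proof -
  have "zp p (int a0 + t) = a \<longleftrightarrow> [int a0 + t = int a] (mod int p)"
    using assms by (simp add: zp_eq_iff)
  also have "\<dots> \<longleftrightarrow> [int a - t = int a0] (mod int p)"
    by (simp add: cong_iff_dvd_diff dvd_diff_commute algebra_simps)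
  also have "\<dots> \<longleftrightarrow> zp p (int a - t) = a0"
    using assms by (simp add: zp_eq_iff)
  finally show ?thesis by auto
qed

lemma cong_replace_iff:
  fixes a a' b b' m :: int
  assumes "[a = a'] (mod m)" "[b = b'] (mod m)"
  shows "[a = b] (mod m) \<longleftrightarrow> [a' = b'] (mod m)"
  using assms by (meson cong_sym cong_trans)

lemma cong_same_diff_iff:
  fixes a a' b b' m :: int
  assumes "a - b = a' - b'"
  shows "[a = b] (mod m) \<longleftrightarrow> [a' = b'] (mod m)"
  using assms by (simp add: cong_iff_dvd_diff)

lemma cong_mult_inverse_iff:
  fixes m l li w z :: int
  assumes "[l * li = 1] (mod m)"
  shows "[l * w = z] (mod m) \<longleftrightarrow> [w = li * z] (mod m)"
proof
  assume "[l * w = z] (mod m)"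
  then have "[li * (l * w) = li * z] (mod m)" by (rule cong_scalar_left)
  moreover have "[li * (l * w) = w] (mod m)"
    using cong_scalar_right[OF assms, of w] by (simp add: algebra_simps)
  ultimately show "[w = li * z] (mod m)" by (meson cong_sym cong_trans)
next
  assume "[w = li * z] (mod m)"
  then have "[l * w = l * (li * z)] (mod m)" by (rule cong_scalar_left)
  moreover have "[l * (li * z) = z] (mod m)"
    using cong_scalar_right[OF assms, of z] by (simp add: algebra_simps)
  ultimately show "[l * w = z] (mod m)" by (rule cong_trans)
qed

lemma inv_modp:
  assumes "prime p" "0 < l" "l < p"
  shows "inv_modp p l < p" and "[l * inv_modp p l = 1] (mod p)"
proof -
  have "coprime l p"
    using assms by (metis coprime_commute prime_imp_coprime_nat dvd_imp_le not_le)
  then obtain x where x: "[l * x = 1] (mod p)"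
    using cong_solve_coprime_nat by auto
  have p0: "0 < p" using assms prime_gt_0_nat by blast
  have ex: "x mod p < p \<and> [l * (x mod p) = 1] (mod p)"
    using x p0 by (simp add: cong_def mod_mult_right_eq)
  have "m = x mod p" if "m < p \<and> [l * m = 1] (mod p)" for m
  proof -
    have "[l * m = l * (x mod p)] (mod p)" using that ex by (meson cong_sym cong_trans)
    then have "[m = x mod p] (mod p)" using cong_mult_lcancel_nat[OF \<open>coprime l p\<close>] by blast
    then show ?thesis using that ex by (simp add: cong_def)
  qed
  then have "inv_modp p l = x mod p"
    unfolding inv_modp_def using ex by (rule the_equality[rotated])
  then show "inv_modp p l < p" "[l * inv_modp p l = 1] (mod p)"
    using ex by simp_all
qed

lemma affine_relabel_iff:
  assumes p0: "0 < p" and inv: "[int l * li = 1] (mod int p)" and "a < p" "a' < p"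
  shows "zp p (li * (int a' - t)) = a \<longleftrightarrow> a' = zp p (int l * int a + t)"
proof -
  have "zp p (li * (int a' - t)) = a \<longleftrightarrow> [li * (int a' - t) = int a] (mod int p)"
    using assms by (simp add: zp_eq_iff)
  also have "\<dots> \<longleftrightarrow> [int a' - t = int l * int a] (mod int p)"
    using inv by (intro cong_mult_inverse_iff) (simp add: mult.commute)
  also have "\<dots> \<longleftrightarrow> [int a' = int l * int a + t] (mod int p)"
    by (rule cong_same_diff_iff) simp
  also have "\<dots> \<longleftrightarrow> a' = zp p (int l * int a + t)"
    using assms by (simp add: zp_eq_iff eq_commute[of a'] cong_sym_eq)
  finally show ?thesis .
qed

section \<open>Sums over Z_p\<close>

lemma sum_translate:
  assumes "0 < p"
  shows "(\<Sum>u<p. G (zp p (t + int u))) = (\<Sum>k<p. G k)"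
  by (rule sum.reindex_bij_witness[where i="\<lambda>k. zp p (int k - t)" and j="\<lambda>u. zp p (t + int u)"])
    (use assms in \<open>auto simp: zp_less zp_eq_iff cong_def int_zp mod_diff_left_eq mod_add_right_eq\<close>)

lemma sum_reflect:
  assumes "0 < p"
  shows "(\<Sum>c<p. G (zp p (t - int c))) = (\<Sum>k<p. G k)"
  by (rule sum.reindex_bij_witness[where i="\<lambda>k. zp p (t - int k)" and j="\<lambda>c. zp p (t - int c)"])
    (use assms in \<open>auto simp: zp_less zp_eq_iff cong_def int_zp mod_diff_right_eq\<close>)

lemma sum_triple: "(\<Sum>s\<in>U \<times> V \<times> C. h s) = (\<Sum>u\<in>U. \<Sum>v\<in>V. \<Sum>c\<in>C. h (u, v, c))"
  by (simp add: sum.cartesian_product)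

lemma sum_outputs_delta:
  fixes F :: "nat \<Rightarrow> nat \<Rightarrow> real"
  assumes "s < p" "t < p"
    and "\<And>a0. a0 < p \<Longrightarrow> A a0 = a \<longleftrightarrow> a0 = s" "\<And>b0. b0 < p \<Longrightarrow> B b0 = b \<longleftrightarrow> b0 = t"
  shows "(\<Sum>a0<p. \<Sum>b0<p. F a0 b0 * (if A a0 = a \<and> B b0 = b then 1 else 0)) = F s t"
proof -
  have "(\<Sum>a0<p. \<Sum>b0<p. F a0 b0 * (if A a0 = a \<and> B b0 = b then 1 else 0))
      = (\<Sum>a0<p. \<Sum>b0<p. if b0 = t then (if a0 = s then F a0 b0 else 0) else 0)"
    by (intro sum.cong refl) (auto simp: assms)
  also have "\<dots> = F s t"
    by (simp only: sum.delta finite_lessThan lessThan_iff assms(1,2) if_True)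
  finally show ?thesis .
qed

lemma sum_PiE_one:
  "(\<Sum>oa\<in>Pi\<^sub>E {..<1::nat} (\<lambda>_. A). G (oa 0)) = (\<Sum>a\<in>A. G a)"
  by (rule sum.reindex_bij_witness[where i="\<lambda>a. \<lambda>i\<in>{..<1}. a" and j="\<lambda>oa. oa 0"])
    (auto simp: PiE_iff extensional_def fun_eq_iff)

section \<open>Protocols\<close>

lemma simulates_one_copy:
  fixes S :: "'r::countable set" and alpha beta :: "'r \<Rightarrow> nat \<Rightarrow> nat"
    and A B :: "'r \<Rightarrow> nat \<Rightarrow> nat \<Rightarrow> nat"
  assumes "finite S" "S \<noteq> {}"
    and "\<forall>s\<in>S. \<forall>x<p. alpha s x < p" "\<forall>s\<in>S. \<forall>y<p. beta s y < p"
    and "\<forall>s\<in>S. \<forall>x<p. \<forall>a0<p. A s x a0 < p" "\<forall>s\<in>S. \<forall>y<p. \<forall>b0<p. B s y b0 < p"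
    and protocol_value: "\<And>a b x y. a < p \<Longrightarrow> b < p \<Longrightarrow> x < p \<Longrightarrow> y < p \<Longrightarrow> P2 a b x y =
      (\<Sum>s\<in>S. \<Sum>a0<p. \<Sum>b0<p. P1 a0 b0 (alpha s x) (beta s y) *
         (if A s x a0 = a \<and> B s y b0 = b then 1 else 0)) / real (card S)"
  shows "simulates p P1 P2"
  unfolding simulates_def
proof (rule exI[of _ 1], rule conjI[OF order_refl], rule exI[of _ "to_nat ` S"],
    rule exI[of _ "\<lambda>_. 1 / real (card S)"],
    rule exI[of _ "\<lambda>i r x. alpha (from_nat r) x"], rule exI[of _ "\<lambda>i r y. beta (from_nat r) y"],
    rule exI[of _ "\<lambda>r x oa. A (from_nat r) x (oa 0)"], rule exI[of _ "\<lambda>r y ob. B (from_nat r) y (ob 0)"],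
    intro conjI allI impI ballI)
  fix a b x y assume "a < p" "b < p" "x < p" "y < p"
  let ?F = "\<lambda>s a0 b0. P1 a0 b0 (alpha s x) (beta s y) * (if A s x a0 = a \<and> B s y b0 = b then 1 else 0)"
  have one_copy: "(\<Sum>oa\<in>Pi\<^sub>E {..<1::nat} (\<lambda>_. {..<p}). \<Sum>ob\<in>Pi\<^sub>E {..<1::nat} (\<lambda>_. {..<p}).
         (\<Prod>i<1. P1 (oa i) (ob i) (alpha s x) (beta s y)) *
         (if A s x (oa 0) = a \<and> B s y (ob 0) = b then 1 else 0)) = (\<Sum>a0<p. \<Sum>b0<p. ?F s a0 b0)" for s
  proof -
    have "(\<Sum>oa\<in>Pi\<^sub>E {..<1::nat} (\<lambda>_. {..<p}). \<Sum>ob\<in>Pi\<^sub>E {..<1::nat} (\<lambda>_. {..<p}). ?F s (oa 0) (ob 0))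
        = (\<Sum>a0<p. \<Sum>ob\<in>Pi\<^sub>E {..<1::nat} (\<lambda>_. {..<p}). ?F s a0 (ob 0))"
      by (rule sum_PiE_one[where G="\<lambda>a0. \<Sum>ob\<in>Pi\<^sub>E {..<1::nat} (\<lambda>_. {..<p}). ?F s a0 (ob 0)"])
    also have "\<dots> = (\<Sum>a0<p. \<Sum>b0<p. ?F s a0 b0)"
      by (rule sum.cong[OF refl sum_PiE_one[where G="?F s _"]])
    finally show ?thesis by simp
  qed
  have "P2 a b x y = (\<Sum>s\<in>S. 1 / real (card S) * (\<Sum>a0<p. \<Sum>b0<p. ?F s a0 b0))"
    using protocol_value \<open>a < p\<close> \<open>b < p\<close> \<open>x < p\<close> \<open>y < p\<close>
    by (simp add: sum_distrib_left[symmetric] divide_inverse mult.commute)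
  also have "\<dots> = (\<Sum>s\<in>S. 1 / real (card S) *
      (\<Sum>oa\<in>Pi\<^sub>E {..<1::nat} (\<lambda>_. {..<p}). \<Sum>ob\<in>Pi\<^sub>E {..<1::nat} (\<lambda>_. {..<p}).
         (\<Prod>i<1. P1 (oa i) (ob i) (alpha s x) (beta s y)) *
         (if A s x (oa 0) = a \<and> B s y (ob 0) = b then 1 else 0)))"
    by (simp only: one_copy)
  also have "\<dots> = (\<Sum>r\<in>to_nat ` S. 1 / real (card S) *
      (\<Sum>oa\<in>Pi\<^sub>E {..<1::nat} (\<lambda>_. {..<p}). \<Sum>ob\<in>Pi\<^sub>E {..<1::nat} (\<lambda>_. {..<p}).
         (\<Prod>i<1. P1 (oa i) (ob i) (alpha (from_nat r) x) (beta (from_nat r) y)) *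
         (if A (from_nat r) x (oa 0) = a \<and> B (from_nat r) y (ob 0) = b then 1 else 0)))"
    by (simp only: sum.reindex[OF inj_on_to_nat] o_def from_nat_to_nat)
  finally show "P2 a b x y = \<dots>" .
qed (use assms in \<open>auto simp: PiE_iff card_image\<close>)

lemma simulates_relabel_outputs:
  fixes \<phi> \<phi>' \<psi> \<psi>' :: "nat \<Rightarrow> nat \<Rightarrow> nat"
  assumes sim: "simulates p P1 P2"
    and \<phi>_less: "\<forall>x<p. \<forall>a'<p. \<phi> x a' < p" and \<psi>_less: "\<forall>y<p. \<forall>b'<p. \<psi> y b' < p"
    and \<phi>'_less: "\<forall>x<p. \<forall>a<p. \<phi>' x a < p" and \<psi>'_less: "\<forall>y<p. \<forall>b<p. \<psi>' y b < p"
    and \<phi>_inv: "\<forall>x<p. \<forall>a<p. \<forall>a'<p. \<phi> x a' = a \<longleftrightarrow> a' = \<phi>' x a"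
    and \<psi>_inv: "\<forall>y<p. \<forall>b<p. \<forall>b'<p. \<psi> y b' = b \<longleftrightarrow> b' = \<psi>' y b"
    and P3: "\<forall>a<p. \<forall>b<p. \<forall>x<p. \<forall>y<p. P3 a b x y = P2 (\<phi>' x a) (\<psi>' y b) x y"
  shows "simulates p P1 P3"
  using sim[unfolded simulates_def]
proof (elim exE conjE)
  fix N :: nat and R :: "nat set" and w :: "nat \<Rightarrow> real"
    and alpha beta :: "nat \<Rightarrow> nat \<Rightarrow> nat \<Rightarrow> nat" and A B :: "nat \<Rightarrow> nat \<Rightarrow> (nat \<Rightarrow> nat) \<Rightarrow> nat"
  let ?O = "Pi\<^sub>E {..<N} (\<lambda>_. {..<p})"
  assume N: "1 \<le> N" and R: "finite R" "\<forall>r\<in>R. 0 \<le> w r" "sum w R = 1"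
    and inputs: "\<forall>i<N. \<forall>r\<in>R. \<forall>x<p. alpha i r x < p" "\<forall>i<N. \<forall>r\<in>R. \<forall>y<p. beta i r y < p"
    and A_less: "\<forall>r\<in>R. \<forall>x<p. \<forall>oa\<in>?O. A r x oa < p"
    and B_less: "\<forall>r\<in>R. \<forall>y<p. \<forall>ob\<in>?O. B r y ob < p"
    and P2: "\<forall>a<p. \<forall>b<p. \<forall>x<p. \<forall>y<p. P2 a b x y =
             (\<Sum>r\<in>R. w r * (\<Sum>oa\<in>?O. \<Sum>ob\<in>?O.
                (\<Prod>i<N. P1 (oa i) (ob i) (alpha i r x) (beta i r y)) *
                (if A r x oa = a \<and> B r y ob = b then 1 else 0)))"
  have P3_protocol: "P3 a b x y =
          (\<Sum>r\<in>R. w r * (\<Sum>oa\<in>?O. \<Sum>ob\<in>?O.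
             (\<Prod>i<N. P1 (oa i) (ob i) (alpha i r x) (beta i r y)) *
             (if \<phi> x (A r x oa) = a \<and> \<psi> y (B r y ob) = b then 1 else 0)))"
    if "a < p" "b < p" "x < p" "y < p" for a b x y
  proof -
    have relabel: "(A r x oa = \<phi>' x a \<and> B r y ob = \<psi>' y b) = (\<phi> x (A r x oa) = a \<and> \<psi> y (B r y ob) = b)"
      if "r \<in> R" "oa \<in> ?O" "ob \<in> ?O" for r oa ob
      using that \<open>a < p\<close> \<open>b < p\<close> \<open>x < p\<close> \<open>y < p\<close> A_less B_less \<phi>_inv \<psi>_inv by simp
    have "P3 a b x y = P2 (\<phi>' x a) (\<psi>' y b) x y"
      using P3 that by simp
    also have "\<dots> = (\<Sum>r\<in>R. w r * (\<Sum>oa\<in>?O. \<Sum>ob\<in>?O.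
             (\<Prod>i<N. P1 (oa i) (ob i) (alpha i r x) (beta i r y)) *
             (if A r x oa = \<phi>' x a \<and> B r y ob = \<psi>' y b then 1 else 0)))"
      using P2 that \<phi>'_less \<psi>'_less by simp
    also have "\<dots> = (\<Sum>r\<in>R. w r * (\<Sum>oa\<in>?O. \<Sum>ob\<in>?O.
             (\<Prod>i<N. P1 (oa i) (ob i) (alpha i r x) (beta i r y)) *
             (if \<phi> x (A r x oa) = a \<and> \<psi> y (B r y ob) = b then 1 else 0)))"
      by (intro sum.cong refl arg_cong2[where f=times] if_cong relabel)
    finally show ?thesis .
  qed
  show ?thesis
    unfolding simulates_def
    by (rule exI[of _ N], rule conjI[OF N], rule exI[of _ R], rule exI[of _ w],
        rule exI[of _ alpha], rule exI[of _ beta],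
        rule exI[of _ "\<lambda>r x oa. \<phi> x (A r x oa)"], rule exI[of _ "\<lambda>r y ob. \<psi> y (B r y ob)"])
      (use R inputs A_less B_less \<phi>_less \<psi>_less P3_protocol in auto)
qed

section \<open>Twirling a box for a function with locally splitting increments\<close>

(* nu_j: the probability that P, on uniformly random inputs, produces outputs
   with a - b = f(x,y) - j. *)
definition defect_weight :: "nat \<Rightarrow> (nat \<Rightarrow> nat \<Rightarrow> nat) \<Rightarrow> box \<Rightarrow> nat \<Rightarrow> real" where
  "defect_weight p f P j =
     (1 / real p ^ 2) * (\<Sum>x<p. \<Sum>y<p. \<Sum>k<p. P k (zp p (int k - int (f x y) + int j)) x y)"

lemma Pf_eq:
  assumes "0 < p" "j < p"
  shows "Pf p f j a b x y = (if j = zp p (int (f x y) - (int a - int b)) then 1 / real p else 0)"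
proof -
  have "[int a - int b = int (f x y) - int j] (mod int p) \<longleftrightarrow> [int (f x y) - (int a - int b) = int j] (mod int p)"
    by (simp add: cong_iff_dvd_diff dvd_diff_commute algebra_simps)
  also have "\<dots> \<longleftrightarrow> j = zp p (int (f x y) - (int a - int b))"
    using assms zp_eq_iff[of p j] by (metis (no_types))
  finally show ?thesis unfolding Pf_def by simp
qed

lemma Pf_mixture_value:
  assumes "0 < p"
  shows "(\<Sum>j<p. \<nu> j * Pf p f j a b x y) = \<nu> (zp p (int (f x y) - (int a - int b))) / real p"
  using assms by (simp add: Pf_eq zp_less if_distrib[of "\<lambda>z. _ * z"] sum.delta cong: if_cong)

(* The twirling computation: after summing out the shared c, each shift (u,v)
   contributes the mass of P at inputs (x+u, y+v) on the event a0 - b0 = f(x+u,y+v) - j0,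
   and summing over the shifts visits every input pair once. *)
lemma twirled_sum:
  fixes DA DB :: "nat \<Rightarrow> nat \<Rightarrow> int" and P :: box
  assumes p0: "0 < p"
    and increment: "\<And>u v. u < p \<Longrightarrow> v < p \<Longrightarrow>
      [int (f (zp p (int x + int u)) (zp p (int y + int v))) = int (f x y) + DA u v + DB u v] (mod int p)"
  shows "(\<Sum>u<p. \<Sum>v<p. \<Sum>c<p. P (zp p (int a - (int c - DA u v))) (zp p (int b - (int c + DB u v)))
            (zp p (int x + int u)) (zp p (int y + int v)))
       = real p ^ 2 * defect_weight p f P (zp p (int (f x y) - (int a - int b)))"
    (is "?lhs = _")
proof -
  define j0 where "j0 = zp p (int (f x y) - (int a - int b))"
  let ?G = "\<lambda>X Y k. P k (zp p (int k - int (f X Y) + int j0)) X Y"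
  have shared_c: "(\<Sum>c<p. P (zp p (int a - (int c - DA u v))) (zp p (int b - (int c + DB u v)))
            (zp p (int x + int u)) (zp p (int y + int v)))
      = (\<Sum>k<p. ?G (zp p (int x + int u)) (zp p (int y + int v)) k)"
    if "u < p" "v < p" for u v
  proof -
    let ?X = "zp p (int x + int u)" and ?Y = "zp p (int y + int v)" and ?t = "int a + DA u v"
    have "zp p (int b - (int c + DB u v)) = zp p (int (zp p (?t - int c)) - int (f ?X ?Y) + int j0)" for c
    proof -
      have "[int (zp p (?t - int c)) - int (f ?X ?Y) + int j0
           = (?t - int c) - (int (f x y) + DA u v + DB u v) + (int (f x y) - (int a - int b))] (mod int p)"
        unfolding j0_def using p0 that
        by (intro cong_add cong_diff cong_int_zp increment)
      also have "(?t - int c) - (int (f x y) + DA u v + DB u v) + (int (f x y) - (int a - int b))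
           = int b - (int c + DB u v)"
        by simp
      finally show ?thesis
        using p0 by (simp add: zp_eq_zp_iff cong_sym_eq)
    qed
    moreover have "zp p (int a - (int c - DA u v)) = zp p (?t - int c)" for c
      by (simp add: algebra_simps)
    ultimately show ?thesis
      using sum_reflect[OF p0, of "?G ?X ?Y" ?t] by simp
  qed
  have "?lhs = (\<Sum>u<p. \<Sum>v<p. \<Sum>k<p. ?G (zp p (int x + int u)) (zp p (int y + int v)) k)"
    by (simp add: shared_c)
  also have "\<dots> = (\<Sum>X<p. \<Sum>Y<p. \<Sum>k<p. ?G X Y k)"
    using sum_translate[OF p0, of "\<lambda>Y. \<Sum>k<p. ?G _ Y k"]
      sum_translate[OF p0, of "\<lambda>X. \<Sum>Y<p. \<Sum>k<p. ?G X Y k"] by simp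
  also have "\<dots> = real p ^ 2 * defect_weight p f P j0"
    using p0 by (simp add: defect_weight_def)
  finally show ?thesis unfolding j0_def .
qed

lemma simulates_Pf_mixture:
  fixes f :: "nat \<Rightarrow> nat \<Rightarrow> nat" and DA DB :: "nat \<Rightarrow> nat \<Rightarrow> nat \<Rightarrow> int" and P :: box
  assumes p0: "0 < p"
    and local_increment: "\<And>x y u v. x < p \<Longrightarrow> y < p \<Longrightarrow> u < p \<Longrightarrow> v < p \<Longrightarrow>
      [int (f (zp p (int x + int u)) (zp p (int y + int v))) = int (f x y) + DA x u v + DB y u v] (mod int p)"
  shows "simulates p P (\<lambda>a b x y. \<Sum>j<p. defect_weight p f P j * Pf p f j a b x y)"
proof -
  define S where "S = {..<p} \<times> {..<p} \<times> {..<p}"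
  define alpha :: "nat \<times> nat \<times> nat \<Rightarrow> nat \<Rightarrow> nat" where "alpha = (\<lambda>(u, v, c) x. zp p (int x + int u))"
  define beta :: "nat \<times> nat \<times> nat \<Rightarrow> nat \<Rightarrow> nat" where "beta = (\<lambda>(u, v, c) y. zp p (int y + int v))"
  define A :: "nat \<times> nat \<times> nat \<Rightarrow> nat \<Rightarrow> nat \<Rightarrow> nat" where "A = (\<lambda>(u, v, c) x a0. zp p (int a0 + (int c - DA x u v)))"
  define B :: "nat \<times> nat \<times> nat \<Rightarrow> nat \<Rightarrow> nat \<Rightarrow> nat" where "B = (\<lambda>(u, v, c) y b0. zp p (int b0 + (int c + DB y u v)))"
  have "(\<Sum>j<p. defect_weight p f P j * Pf p f j a b x y) =
      (\<Sum>s\<in>S. \<Sum>a0<p. \<Sum>b0<p. P a0 b0 (alpha s x) (beta s y) *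
         (if A s x a0 = a \<and> B s y b0 = b then 1 else 0)) / real (card S)"
    if "a < p" "b < p" "x < p" "y < p" for a b x y
  proof -
    have one_round: "(\<Sum>a0<p. \<Sum>b0<p. P a0 b0 (alpha (u, v, c) x) (beta (u, v, c) y) *
          (if A (u, v, c) x a0 = a \<and> B (u, v, c) y b0 = b then 1 else 0))
        = P (zp p (int a - (int c - DA x u v))) (zp p (int b - (int c + DB y u v)))
            (zp p (int x + int u)) (zp p (int y + int v))" for u v c
      unfolding alpha_def beta_def A_def B_def prod.case
      by (intro sum_outputs_delta) (use p0 \<open>a < p\<close> \<open>b < p\<close> in \<open>simp_all add: zp_less zp_add_eq_iff\<close>)
    have "(\<Sum>s\<in>S. \<Sum>a0<p. \<Sum>b0<p. P a0 b0 (alpha s x) (beta s y) *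
           (if A s x a0 = a \<and> B s y b0 = b then 1 else 0))
        = (\<Sum>u<p. \<Sum>v<p. \<Sum>c<p. P (zp p (int a - (int c - DA x u v))) (zp p (int b - (int c + DB y u v)))
            (zp p (int x + int u)) (zp p (int y + int v)))"
      unfolding S_def sum_triple one_round ..
    also have "\<dots> = real p ^ 2 * defect_weight p f P (zp p (int (f x y) - (int a - int b)))"
      by (intro twirled_sum) (use p0 \<open>x < p\<close> \<open>y < p\<close> local_increment in auto)
    finally show ?thesis
      using p0 by (simp add: S_def Pf_mixture_value card_cartesian_product power2_eq_square)
  qed
  then show ?thesis
    by (intro simulates_one_copy[where S=S and alpha=alpha and beta=beta and A=A and B=B])
      (use p0 in \<open>auto simp: S_def alpha_def beta_def A_def B_def zp_less\<close>)
qed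

section \<open>Bilinear functions\<close>

lemma bilinear_local_increment:
  fixes x y u v l :: nat and g h :: "nat \<Rightarrow> nat" and f :: "nat \<Rightarrow> nat \<Rightarrow> nat"
  assumes p0: "0 < p"
    and f_form: "\<And>x y. [int (f x y) = int l * int x * int y + int (g x) + int (h y)] (mod int p)"
  defines "X \<equiv> zp p (int x + int u)" and "Y \<equiv> zp p (int y + int v)"
  shows "[int (f X Y) = int (f x y)
           + (int l * int X * int v + int (g X) - int (g x))
           + (int l * int u * int y + int (h Y) - int (h y))] (mod int p)"
proof -
  have X: "[int X = int x + int u] (mod int p)" and Y: "[int Y = int y + int v] (mod int p)"
    unfolding X_def Y_def using p0 by (simp_all add: cong_int_zp)
  have "[int (f X Y) = int l * int X * int Y + int (g X) + int (h Y)] (mod int p)"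
    by (rule f_form)
  also have "[int l * int X * int Y + int (g X) + int (h Y)
            = int l * int X * (int y + int v) + int (g X) + int (h Y)] (mod int p)"
    using Y by (intro cong_add cong_refl cong_scalar_left)
  also have "int l * int X * (int y + int v) + int (g X) + int (h Y)
            = int l * int X * int y + (int l * int X * int v + int (g X) + int (h Y))"
    by (simp add: algebra_simps)
  also have "[\<dots> = int l * (int x + int u) * int y + (int l * int X * int v + int (g X) + int (h Y))] (mod int p)"
    using X by (intro cong_add cong_refl cong_scalar_right cong_scalar_left)
  also have "int l * (int x + int u) * int y + (int l * int X * int v + int (g X) + int (h Y))
            = (int l * int x * int y + int (g x) + int (h y))
              + (int l * int X * int v + int (g X) - int (g x))
              + (int l * int u * int y + int (h Y) - int (h y))"
    by (simp add: algebra_simps)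
  also have "[\<dots> = int (f x y)
              + (int l * int X * int v + int (g X) - int (g x))
              + (int l * int u * int y + int (h Y) - int (h y))] (mod int p)"
    using f_form[of x y] by (intro cong_add cong_refl) (rule cong_sym)
  finally show ?thesis .
qed

lemma Pf_relabel_PR:
  fixes l li :: nat and g h :: "nat \<Rightarrow> nat" and f :: "nat \<Rightarrow> nat \<Rightarrow> nat"
  assumes p0: "0 < p" and inv: "[int l * int li = 1] (mod int p)"
    and f_form: "[int (f x y) = int l * int x * int y + int (g x) + int (h y)] (mod int p)"
  shows "Pf p f j (zp p (int l * int a + int (g x))) (zp p (int l * int b - int (h y))) x y
       = PR p (zp p (int li * int j)) a b x y"
proof -
  have "[int (zp p (int l * int a + int (g x))) - int (zp p (int l * int b - int (h y)))
          = int (f x y) - int j] (mod int p)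
    \<longleftrightarrow> [(int l * int a + int (g x)) - (int l * int b - int (h y))
          = (int l * int x * int y + int (g x) + int (h y)) - int j] (mod int p)"
    using p0 f_form by (intro cong_replace_iff cong_diff cong_int_zp cong_refl)
  also have "\<dots> \<longleftrightarrow> [int l * (int a - int b - int x * int y) = - int j] (mod int p)"
    by (rule cong_same_diff_iff) (simp add: algebra_simps)
  also have "\<dots> \<longleftrightarrow> [int a - int b - int x * int y = int li * - int j] (mod int p)"
    using inv by (rule cong_mult_inverse_iff)
  also have "\<dots> \<longleftrightarrow> [int a - int b = int x * int y - int li * int j] (mod int p)"
    by (rule cong_same_diff_iff) (simp add: algebra_simps)
  also have "\<dots> \<longleftrightarrow> [int a - int b = int x * int y - int (zp p (int li * int j))] (mod int p)"
    using p0 by (intro cong_replace_iff cong_diff cong_refl cong_sym[OF cong_int_zp])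
  finally show ?thesis
    unfolding Pf_def PR_def by simp
qed

theorem mainTheorem9:
  fixes p l :: nat and g h :: "nat \<Rightarrow> nat" and P :: box
  assumes "prime p"
    and "0 < l" and "l < p"
    and "\<forall>x<p. g x < p" and "\<forall>y<p. h y < p"
    and "is_box p P"
  defines "f \<equiv> (\<lambda>x y. zp p (int l * int x * int y + int (g x) + int (h y)))"
  defines "\<nu> \<equiv> (\<lambda>j. (1 / real p ^ 2) *
              (\<Sum>x<p. \<Sum>y<p. \<Sum>k<p. P k (zp p (int k - int (f x y) + int j)) x y))"
  shows "simulates p P (\<lambda>a b x y. \<Sum>j<p. \<nu> j * Pf p f j a b x y)
       \<and> simulates p P (\<lambda>a b x y. \<Sum>j<p. \<nu> j * PR p (zp p (int (inv_modp p l) * int j)) a b x y)"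
proof
  have p0: "0 < p"
    using \<open>prime p\<close> prime_gt_0_nat by blast
  define li where "li = inv_modp p l"
  have inv: "[int l * int li = 1] (mod int p)"
    using inv_modp(2)[OF assms(1-3)] unfolding li_def by (metis cong_int_iff of_nat_1 of_nat_mult)
  have f_form: "[int (f x y) = int l * int x * int y + int (g x) + int (h y)] (mod int p)" for x y
    unfolding f_def using p0 by (simp add: cong_int_zp)
  have "\<nu> = defect_weight p f P"
    unfolding \<nu>_def defect_weight_def ..
  then show Pf_part: "simulates p P (\<lambda>a b x y. \<Sum>j<p. \<nu> j * Pf p f j a b x y)"
    using simulates_Pf_mixture[OF p0 bilinear_local_increment[where f=f and g=g and h=h, OF p0 f_form]]
    by simp
  have \<phi>_inv: "zp p (int li * (int a' - int (g x))) = a \<longleftrightarrow> a' = zp p (int l * int a + int (g x))"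
    if "a < p" "a' < p" for x a a'
    using affine_relabel_iff[OF p0 inv that] .
  have \<psi>_inv: "zp p (int li * (int b' + int (h y))) = b \<longleftrightarrow> b' = zp p (int l * int b - int (h y))"
    if "b < p" "b' < p" for y b b'
    using affine_relabel_iff[OF p0 inv that, of "- int (h y)"] by simp
  have PR_as_Pf: "(\<Sum>j<p. \<nu> j * PR p (zp p (int (inv_modp p l) * int j)) a b x y)
      = (\<Sum>j<p. \<nu> j * Pf p f j (zp p (int l * int a + int (g x))) (zp p (int l * int b - int (h y))) x y)"
    for a b x y
    unfolding li_def[symmetric] Pf_relabel_PR[where f=f and g=g and h=h, OF p0 inv f_form] ..
  show "simulates p P (\<lambda>a b x y. \<Sum>j<p. \<nu> j * PR p (zp p (int (inv_modp p l) * int j)) a b x y)"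
    by (rule simulates_relabel_outputs[OF Pf_part,
        where \<phi>="\<lambda>x a'. zp p (int li * (int a' - int (g x)))" and \<phi>'="\<lambda>x a. zp p (int l * int a + int (g x))"
          and \<psi>="\<lambda>y b'. zp p (int li * (int b' + int (h y)))" and \<psi>'="\<lambda>y b. zp p (int l * int b - int (h y))"])
      (use p0 in \<open>simp_all add: zp_less \<phi>_inv \<psi>_inv PR_as_Pf\<close>)
qed

end
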